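(* Assume the Nested Logit model without outside option described in the context satisfies Assumptions 1 and 2, and let $S \in \mathcal{S}$. Then for every $i \in S$: (I) if $N(i) \subseteq S$, then $\mathsf{BF}(i,S) \le \mathsf{BF}(k,S)$ for all $k \in S$ (in particular $\mathsf{BF}(i,S)$ takes the same value for all $i \in S$ with $N(i) \subseteq S$); (II) if $N(i) \not\subseteq S$, then for every $j \in S \setminus \{i\}$ we have $N(i) = N(j)$ if and only if $\mathsf{BF}(i,S) = \mathsf{BF}(j,S)$. Consequently, with $\mathsf{minBF}(S) = \arg\min_{k \in S} \mathsf{BF}(k,S)$ (the set of items of $S$ attaining the minimum boost factor): (a) if $N(i) \subseteq S$ for some $i \in S$, then $\mathsf{minBF}(S) = \bigcup_{N \in \mathcal{N} : N \subseteq S} N$; otherwise $\mathsf{minBF}(S) \subsetneq N$ for a single nest $N \in \mathcal{N}$ not fully contained in $S$; (b) if $i,j \in S$ and $\mathsf{BF}(i,S) = \mathsf{BF}(j,S) > \min_{k \in S} \mathsf{BF}(k,S)$, then $N(i) = N(j)$; (c) if $i,j \in S$ and $\mathsf{BF}(i,S) \neq \mathsf{BF}(j,S)$, then $N(i) \neq N(j)$.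
   Context: Items: $[n]=\{1,\dots,n\}$ with $n\ge 2$. Experiment design: fix an integer base $b \ge 2$, let $L = \lceil \log_b n \rceil$, fix an injective map $\sigma: [n] \to \{0,\dots,b-1\}^L$ with coordinates $\sigma_\ell(i)$, let $S_{\ell,-d} = \{i \in [n] : \sigma_\ell(i) \neq d\}$ for $\ell \in \{1,\dots,L\}$, $d \in \{0,\dots,b-1\}$, and $\mathcal{S} = \{S_{\ell,-d}\}_{\ell,d}$; the control assortment $[n]$ is also offered. Nested Logit model without outside option: $\mathcal{N}$ is a partition of $[n]$ into nests, $N(i)$ the nest containing $i$; weights $v_i > 0$; parameters $\lambda_N \in [0,1]$, with an extra weight $v_N>0$ when $\lambda_N=0$. $v_N(S) = (\sum_{i \in N \cap S} v_i)^{\lambda_N}$ if $\lambda_N \in (0,1]$, $v_N(S) = v_N \mathbf{1}(N \cap S \neq \emptyset)$ if $\lambda_N = 0$. For $i \in S$, $\phi(i,S) = \frac{v_{N(i)}(S)}{\sum_{N \in \mathcal{N}} v_N(S)} \cdot \frac{v_i}{\sum_{j \in N(i) \cap S} v_j}$ (no outside option, so $\sum_{i\in S}\phi(i,S)=1$). Boost factor: $\mathsf{BF}(i,S) = \phi(i,S)/\phi(i,[n])$ for $S \in \mathcal{S}$, $i \in S$. Multiplier: $\mathsf{Mult}(N,S) = \left(\frac{\sum_{j \in N} v_j}{\sum_{j \in N \cap S} v_j}\right)^{1-\lambda_N}$. Assumption 1: $\lambda_N = 1$ iff $|N| = 1$. Assumption 2: for every $S \in \mathcal{S}$ and distinct nests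 $N \neq N'$ with $\emptyset \neq N \cap S \neq N$ and $\emptyset \neq N' \cap S \neq N'$, $\mathsf{Mult}(N,S) \neq \mathsf{Mult}(N',S)$. *)

theory Defs
  imports Complex_Main "HOL-Library.FuncSet" "HOL-Library.Disjoint_Sets"
begin

definition num_digits :: "nat \<Rightarrow> nat \<Rightarrow> nat" where
  "num_digits b n = nat \<lceil>log (real b) (real n)\<rceil>"

text \<open>sigma i is an extensional function {1..L} -> {0..<b}; coordinate l is sigma i l.
  The design family consists of the sets S_{l,-d} = {i. sigma_l(i) ~= d}.\<close>
definition design_sets :: "nat \<Rightarrow> nat \<Rightarrow> nat \<Rightarrow> (nat \<Rightarrow> nat \<Rightarrow> nat) \<Rightarrow> nat set set" where
  "design_sets n b L \<sigma> =
     {{i \<in> {1..n}. \<sigma> i l \<noteq> d} | l d. l \<in> {1..L} \<and> d \<in> {0..<b}}"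

definition nest_of :: "nat set set \<Rightarrow> nat \<Rightarrow> nat set" where
  "nest_of Ns i = (THE N. N \<in> Ns \<and> i \<in> N)"

definition nest_val :: "(nat \<Rightarrow> real) \<Rightarrow> (nat set \<Rightarrow> real) \<Rightarrow> (nat set \<Rightarrow> real)
    \<Rightarrow> nat set \<Rightarrow> nat set \<Rightarrow> real" where
  "nest_val v lam vN N S =
     (if lam N = 0 then (if N \<inter> S \<noteq> {} then vN N else 0)
      else (\<Sum>j\<in>N \<inter> S. v j) powr lam N)"

definition nl_prob :: "nat set set \<Rightarrow> (nat \<Rightarrow> real) \<Rightarrow> (nat set \<Rightarrow> real) \<Rightarrow> (nat set \<Rightarrow> real)
    \<Rightarrow> nat \<Rightarrow> nat set \<Rightarrow> real" where
  "nl_prob Ns v lam vN i S =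
     nest_val v lam vN (nest_of Ns i) S / (\<Sum>N\<in>Ns. nest_val v lam vN N S)
     * (v i / (\<Sum>j\<in>nest_of Ns i \<inter> S. v j))"

definition boost :: "nat \<Rightarrow> nat set set \<Rightarrow> (nat \<Rightarrow> real) \<Rightarrow> (nat set \<Rightarrow> real) \<Rightarrow> (nat set \<Rightarrow> real)
    \<Rightarrow> nat \<Rightarrow> nat set \<Rightarrow> real" where
  "boost n Ns v lam vN i S = nl_prob Ns v lam vN i S / nl_prob Ns v lam vN i {1..n}"

definition mult :: "(nat \<Rightarrow> real) \<Rightarrow> (nat set \<Rightarrow> real) \<Rightarrow> nat set \<Rightarrow> nat set \<Rightarrow> real" where
  "mult v lam N S = ((\<Sum>j\<in>N. v j) / (\<Sum>j\<in>N \<inter> S. v j)) powr (1 - lam N)"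

definition minBF :: "nat \<Rightarrow> nat set set \<Rightarrow> (nat \<Rightarrow> real) \<Rightarrow> (nat set \<Rightarrow> real) \<Rightarrow> (nat set \<Rightarrow> real)
    \<Rightarrow> nat set \<Rightarrow> nat set" where
  "minBF n Ns v lam vN S =
     {i \<in> S. \<forall>k\<in>S. boost n Ns v lam vN i S \<le> boost n Ns v lam vN k S}"

end

theory Submission
  imports Defs
begin

(* Write Z(T) for the sum of the nest attractions v_N(T).  In phi(k,T) the nest share and the
   within-nest share combine into (sum of v over N(k) and T) powr (lambda - 1), so the boost
   factor factorises as BF(k,S) = Z([n]) / Z(S) * Mult(N(k),S).  Now Mult(N,S) >= 1, with
   equality exactly when N is contained in S (by Assumption 1 a nest cut by S has lambda_N < 1),
   and by Assumption 2 different cut nests have different multipliers.  Hence the minimum boost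
   Z([n]) / Z(S) is attained precisely on the fully offered nests, and every other boost level
   determines a single nest.  Design sets are nonempty: if S_{l,-d} were empty, all n injective
   codewords would share the digit d at position l, leaving only b^(L-1) < n possibilities. *)

lemma partition_on_nest_of_eq:
  assumes "partition_on U Ns" "N \<in> Ns" "i \<in> N"
  shows "nest_of Ns i = N"
  unfolding nest_of_def
proof (rule the_equality)
  fix N' assume "N' \<in> Ns \<and> i \<in> N'"
  then show "N' = N"
    using assms partition_onD2[OF assms(1)] by (auto dest: disjointD)
qed (use assms in simp)

lemma partition_on_nest_of:
  assumes "partition_on U Ns" "i \<in> U"
  shows "nest_of Ns i \<in> Ns" "i \<in> nest_of Ns i"
proof -
  obtain N where "N \<in> Ns" "i \<in> N"
    using assms partition_onD1 by blast
  then show "nest_of Ns i \<in> Ns" "i \<in> nest_of Ns i"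
    using partition_on_nest_of_eq[OF assms(1)] by auto
qed

lemma mult_ge_one:
  assumes "finite N" "\<forall>j\<in>N. 0 < v j" "N \<inter> S \<noteq> {}" "lam N \<le> 1"
  shows "1 \<le> mult v lam N S"
proof -
  have "0 < (\<Sum>j\<in>N \<inter> S. v j)"
    using assms by (intro sum_pos) auto
  moreover have "(\<Sum>j\<in>N \<inter> S. v j) \<le> (\<Sum>j\<in>N. v j)"
    using assms by (intro sum_mono2) auto
  ultimately show ?thesis
    unfolding mult_def using assms(4) by (intro ge_one_powr_ge_zero) auto
qed

lemma mult_eq_one_iff:
  assumes "finite N" "\<forall>j\<in>N. 0 < v j" "N \<inter> S \<noteq> {}"
    and "lam N \<le> 1" "lam N = 1 \<Longrightarrow> card N = 1"
  shows "mult v lam N S = 1 \<longleftrightarrow> N \<subseteq> S"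
proof (cases "N \<subseteq> S")
  case True
  then have "N \<inter> S = N" by blast
  moreover have "0 < (\<Sum>j\<in>N. v j)"
    using assms True by (intro sum_pos) auto
  ultimately show ?thesis
    unfolding mult_def using True by simp
next
  case False
  have "lam N \<noteq> 1"
  proof
    assume "lam N = 1"
    then obtain x where "N = {x}"
      using assms(5) card_1_singletonE by blast
    then show False
      using assms(3) False by blast
  qed
  then have "0 < 1 - lam N"
    using assms(4) by simp
  have "0 < (\<Sum>j\<in>N \<inter> S. v j)"
    using assms by (intro sum_pos) auto
  moreover obtain x where "x \<in> N - S"
    using False by blast
  then have "(\<Sum>j\<in>N \<inter> S. v j) < (\<Sum>j\<in>N. v j)"
    using assms by (intro sum_strict_mono2[where b = x]) auto
  ultimately have "1 < (\<Sum>j\<in>N. v j) / (\<Sum>j\<in>N \<inter> S. v j)"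
    by simp
  then have "1 < mult v lam N S"
    unfolding mult_def using \<open>0 < 1 - lam N\<close> by simp
  then show ?thesis
    using False by simp
qed

definition nl_norm :: "nat set set \<Rightarrow> (nat \<Rightarrow> real) \<Rightarrow> (nat set \<Rightarrow> real) \<Rightarrow> (nat set \<Rightarrow> real)
    \<Rightarrow> nat set \<Rightarrow> real" where
  "nl_norm Ns v lam vN S = (\<Sum>N\<in>Ns. nest_val v lam vN N S)"

locale nested_logit =
  fixes n :: nat and Ns :: "nat set set" and v :: "nat \<Rightarrow> real" and lam vN :: "nat set \<Rightarrow> real"
  assumes partition: "partition_on {1..n} Ns"
    and weight_pos: "\<And>i. i \<in> {1..n} \<Longrightarrow> 0 < v i"
    and lam_range: "\<And>N. N \<in> Ns \<Longrightarrow> 0 \<le> lam N \<and> lam N \<le> 1"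
    and nest_weight_pos: "\<And>N. N \<in> Ns \<Longrightarrow> lam N = 0 \<Longrightarrow> 0 < vN N"
begin

abbreviation nest :: "nat \<Rightarrow> nat set" where
  "nest i \<equiv> nest_of Ns i"

lemma nest_in: "i \<in> {1..n} \<Longrightarrow> nest i \<in> Ns"
  and mem_nest: "i \<in> {1..n} \<Longrightarrow> i \<in> nest i"
  using partition_on_nest_of[OF partition] by auto

lemma nest_eq: "N \<in> Ns \<Longrightarrow> i \<in> N \<Longrightarrow> nest i = N"
  using partition_on_nest_of_eq[OF partition] .

lemma nest_subset: "N \<in> Ns \<Longrightarrow> N \<subseteq> {1..n}"
  using partition_onD1[OF partition] by blast

lemma finite_nest: "N \<in> Ns \<Longrightarrow> finite N"
  using nest_subset finite_subset by blast

lemma nest_weight_sum_pos: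
  assumes "N \<in> Ns" "N \<inter> T \<noteq> {}"
  shows "0 < (\<Sum>j\<in>N \<inter> T. v j)"
proof (rule sum_pos)
  show "finite (N \<inter> T)"
    using finite_nest[OF assms(1)] by blast
  show "\<And>j. j \<in> N \<inter> T \<Longrightarrow> 0 < v j"
    using nest_subset[OF assms(1)] weight_pos by blast
qed (fact assms(2))

lemma nest_val_nonneg: "N \<in> Ns \<Longrightarrow> 0 \<le> nest_val v lam vN N T"
  unfolding nest_val_def using nest_weight_pos[of N] by (auto intro: less_imp_le)

lemma nest_val_eq:
  assumes "N \<in> Ns" "N \<inter> T \<noteq> {}"
  shows "nest_val v lam vN N T = (if lam N = 0 then vN N else 1) * (\<Sum>j\<in>N \<inter> T. v j) powr lam N"
  using assms nest_weight_sum_pos[OF assms] unfolding nest_val_def by simp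

lemma nest_val_pos:
  assumes "N \<in> Ns" "N \<inter> T \<noteq> {}"
  shows "0 < nest_val v lam vN N T"
  using nest_val_eq[OF assms] nest_weight_sum_pos[OF assms] nest_weight_pos[OF assms(1)] by simp

lemma nl_norm_pos:
  assumes "k \<in> T" "T \<subseteq> {1..n}"
  shows "0 < nl_norm Ns v lam vN T"
  unfolding nl_norm_def
proof (rule sum_pos2)
  show "finite Ns"
    using finite_elements[OF _ partition] by simp
  show "nest k \<in> Ns" "0 < nest_val v lam vN (nest k) T"
    using nest_in mem_nest nest_val_pos assms by blast+
qed (use nest_val_nonneg in blast)

lemma nl_prob_eq:
  assumes "k \<in> T" "T \<subseteq> {1..n}"
  shows "nl_prob Ns v lam vN k T = (if lam (nest k) = 0 then vN (nest k) else 1) * v k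
           / (nl_norm Ns v lam vN T * (\<Sum>j\<in>nest k \<inter> T. v j) powr (1 - lam (nest k)))"
proof -
  have N: "nest k \<in> Ns" "nest k \<inter> T \<noteq> {}"
    using nest_in mem_nest assms by blast+
  then have "0 < (\<Sum>j\<in>nest k \<inter> T. v j)"
    by (rule nest_weight_sum_pos)
  then show ?thesis
    unfolding nl_prob_def nl_norm_def[symmetric] nest_val_eq[OF N] by (simp add: powr_diff)
qed

lemma boost_eq_mult:
  assumes "k \<in> S" "S \<subseteq> {1..n}"
  shows "boost n Ns v lam vN k S
           = nl_norm Ns v lam vN {1..n} / nl_norm Ns v lam vN S * mult v lam (nest k) S"
proof -
  have k: "k \<in> {1..n}"
    using assms by blast
  have "nest k \<inter> {1..n} = nest k"
    using nest_subset[OF nest_in[OF k]] by blast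
  moreover have "0 < (\<Sum>j\<in>nest k \<inter> S. v j)" "0 < (\<Sum>j\<in>nest k \<inter> {1..n}. v j)"
    using nest_weight_sum_pos nest_in mem_nest k assms(1) by blast+
  moreover have "0 < nl_norm Ns v lam vN S" "0 < nl_norm Ns v lam vN {1..n}"
    using nl_norm_pos assms k by blast+
  moreover have "0 < (if lam (nest k) = 0 then vN (nest k) else 1)" "0 < v k"
    using nest_weight_pos[OF nest_in[OF k]] weight_pos[OF k] by simp_all
  ultimately show ?thesis
    unfolding boost_def nl_prob_eq[OF assms] nl_prob_eq[OF k order_refl] mult_def
    by (simp add: powr_divide field_simps)
qed

end

locale nested_logit_assortment = nested_logit +
  fixes S :: "nat set"
  assumes assortment_subset: "S \<subseteq> {1..n}" and assortment_nonempty: "S \<noteq> {}"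
    and card_one_if_lam_one: "\<And>N. N \<in> Ns \<Longrightarrow> lam N = 1 \<Longrightarrow> card N = 1"
    and mult_distinct: "\<And>N N'. \<lbrakk>N \<in> Ns; N' \<in> Ns; N \<noteq> N'; N \<inter> S \<noteq> {}; \<not> N \<subseteq> S;
                          N' \<inter> S \<noteq> {}; \<not> N' \<subseteq> S\<rbrakk> \<Longrightarrow> mult v lam N S \<noteq> mult v lam N' S"
begin

abbreviation BF :: "nat \<Rightarrow> real" where
  "BF k \<equiv> boost n Ns v lam vN k S"

definition base_boost :: real where
  "base_boost \<equiv> nl_norm Ns v lam vN {1..n} / nl_norm Ns v lam vN S"

lemma finite_assortment: "finite S"
  using assortment_subset finite_subset by blast

lemma assortment_nest: "k \<in> S \<Longrightarrow> nest k \<in> Ns \<and> k \<in> nest k"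
  using assortment_subset nest_in mem_nest by blast

lemma base_boost_pos: "0 < base_boost"
proof -
  obtain k where k: "k \<in> S"
    using assortment_nonempty by blast
  then have "k \<in> {1..n}"
    using assortment_subset by blast
  then show ?thesis
    unfolding base_boost_def
    using nl_norm_pos[OF k assortment_subset] nl_norm_pos[of k "{1..n}"] by simp
qed

lemma boost_eq: "k \<in> S \<Longrightarrow> BF k = base_boost * mult v lam (nest k) S"
  unfolding base_boost_def using boost_eq_mult assortment_subset by blast

lemma mult_nest_ge_one:
  assumes "k \<in> S"
  shows "1 \<le> mult v lam (nest k) S"
proof (rule mult_ge_one)
  have N: "nest k \<in> Ns" "k \<in> nest k"
    using assortment_nest assms by auto
  show "finite (nest k)" "lam (nest k) \<le> 1"
    using finite_nest lam_range N by blast+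
  show "\<forall>j\<in>nest k. 0 < v j"
    using nest_subset[OF N(1)] weight_pos by blast
  show "nest k \<inter> S \<noteq> {}"
    using N assms by blast
qed

lemma mult_nest_eq_one_iff:
  assumes "k \<in> S"
  shows "mult v lam (nest k) S = 1 \<longleftrightarrow> nest k \<subseteq> S"
proof (rule mult_eq_one_iff)
  have N: "nest k \<in> Ns" "k \<in> nest k"
    using assortment_nest assms by auto
  show "finite (nest k)" "lam (nest k) \<le> 1"
    using finite_nest lam_range N by blast+
  show "lam (nest k) = 1 \<Longrightarrow> card (nest k) = 1"
    using card_one_if_lam_one N by blast
  show "\<forall>j\<in>nest k. 0 < v j"
    using nest_subset[OF N(1)] weight_pos by blast
  show "nest k \<inter> S \<noteq> {}"
    using N assms by blast
qed

lemma base_boost_le_boost: "k \<in> S \<Longrightarrow> base_boost \<le> BF k"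
  using boost_eq mult_nest_ge_one base_boost_pos by simp

lemma boost_eq_base_iff: "k \<in> S \<Longrightarrow> BF k = base_boost \<longleftrightarrow> nest k \<subseteq> S"
  using boost_eq mult_nest_eq_one_iff base_boost_pos by simp

lemma boost_eq_if_same_nest: "i \<in> S \<Longrightarrow> j \<in> S \<Longrightarrow> nest i = nest j \<Longrightarrow> BF i = BF j"
  using boost_eq by simp

lemma same_nest_if_boost_eq:
  assumes "i \<in> S" "j \<in> S" "\<not> nest i \<subseteq> S" "BF i = BF j"
  shows "nest i = nest j"
proof (rule ccontr)
  assume "nest i \<noteq> nest j"
  have "mult v lam (nest i) S = mult v lam (nest j) S"
    using assms boost_eq base_boost_pos by simp
  moreover have "\<not> nest j \<subseteq> S"
    using assms boost_eq_base_iff by metis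
  ultimately show False
    using mult_distinct \<open>nest i \<noteq> nest j\<close> assms assortment_nest by blast
qed

lemma boost_le_if_nest_subset: "i \<in> S \<Longrightarrow> nest i \<subseteq> S \<Longrightarrow> k \<in> S \<Longrightarrow> BF i \<le> BF k"
  using boost_eq_base_iff base_boost_le_boost by metis

lemma ex_boost_minimizer: "\<exists>i\<in>S. \<forall>k\<in>S. BF i \<le> BF k"
  using arg_min_if_finite[OF finite_assortment assortment_nonempty, of BF] by (metis not_le)

lemma minBF_eq_level_set:
  assumes "i \<in> S" "\<forall>k\<in>S. BF i \<le> BF k"
  shows "minBF n Ns v lam vN S = {k \<in> S. BF k = BF i}"
  unfolding minBF_def using assms by (auto intro: order_antisym)

lemma minBF_eq_Union_covered_nests:
  assumes "i \<in> S" "nest i \<subseteq> S"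
  shows "minBF n Ns v lam vN S = \<Union>{N \<in> Ns. N \<subseteq> S}"
proof -
  have "BF i = base_boost"
    using boost_eq_base_iff assms by blast
  then have "minBF n Ns v lam vN S = {k \<in> S. BF k = base_boost}"
    using minBF_eq_level_set[OF assms(1)] base_boost_le_boost by simp
  also have "\<dots> = {k \<in> S. nest k \<subseteq> S}"
    using boost_eq_base_iff by blast
  also have "\<dots> = \<Union>{N \<in> Ns. N \<subseteq> S}"
    using assortment_nest nest_eq by blast
  finally show ?thesis .
qed

lemma ex1_nest_containing_minBF:
  assumes "\<forall>i\<in>S. \<not> nest i \<subseteq> S"
  shows "\<exists>!N. N \<in> Ns \<and> \<not> N \<subseteq> S \<and> minBF n Ns v lam vN S \<subset> N"
proof -
  obtain i where i: "i \<in> S" "\<forall>k\<in>S. BF i \<le> BF k"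
    using ex_boost_minimizer by blast
  have "minBF n Ns v lam vN S = {k \<in> S. BF k = BF i}"
    using minBF_eq_level_set[OF i] .
  also have "\<dots> = nest i \<inter> S"
  proof -
    have "BF k = BF i \<longleftrightarrow> k \<in> nest i" if "k \<in> S" for k
    proof -
      have "BF k = BF i \<longleftrightarrow> nest i = nest k"
        using same_nest_if_boost_eq[OF i(1) that] boost_eq_if_same_nest[OF i(1) that] assms i(1)
        by auto
      also have "\<dots> \<longleftrightarrow> k \<in> nest i"
        using assortment_nest[OF that] assortment_nest[OF i(1)] nest_eq by metis
      finally show ?thesis .
    qed
    then show ?thesis
      by blast
  qed
  finally have min: "minBF n Ns v lam vN S = nest i \<inter> S" .
  show ?thesis
  proof
    show "nest i \<in> Ns \<and> \<not> nest i \<subseteq> S \<and> minBF n Ns v lam vN S \<subset> nest i"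
      unfolding min using i assms assortment_nest by blast
    show "N = nest i" if "N \<in> Ns \<and> \<not> N \<subseteq> S \<and> minBF n Ns v lam vN S \<subset> N" for N
      using that min i assortment_nest nest_eq by blast
  qed
qed

lemma same_nest_if_boost_eq_gt_Min:
  assumes "i \<in> S" "j \<in> S" "BF i = BF j" "Min (BF ` S) < BF j"
  shows "nest i = nest j"
proof -
  have "base_boost \<le> Min (BF ` S)"
    using finite_assortment assortment_nonempty base_boost_le_boost by simp
  then have "\<not> nest i \<subseteq> S"
    using assms boost_eq_base_iff by fastforce
  then show ?thesis
    using assms same_nest_if_boost_eq by blast
qed

end

lemma card_le_pow_if_coordinate_const:
  assumes inj: "inj_on \<sigma> A" and into: "\<sigma> \<in> A \<rightarrow> I \<rightarrow>\<^sub>E B"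
    and fin: "finite I" "finite B" and l: "l \<in> I" and const: "\<forall>i\<in>A. \<sigma> i l = d"
  shows "card A \<le> card B ^ (card I - 1)"
proof -
  let ?K = "I - {l}"
  have "inj_on (\<lambda>i. restrict (\<sigma> i) ?K) A"
  proof (rule inj_onI)
    fix i j assume ij: "i \<in> A" "j \<in> A" and "restrict (\<sigma> i) ?K = restrict (\<sigma> j) ?K"
    then have "\<forall>x\<in>?K. \<sigma> i x = \<sigma> j x"
      by (metis restrict_apply')
    then have "\<sigma> i = \<sigma> j"
      using ij into const by (intro extensionalityI[where A = I]) (auto simp: PiE_iff)
    then show "i = j"
      using inj ij by (simp add: inj_on_eq_iff)
  qed
  moreover have "(\<lambda>i. restrict (\<sigma> i) ?K) ` A \<subseteq> ?K \<rightarrow>\<^sub>E B"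
  proof (rule image_subsetI)
    fix i assume "i \<in> A"
    then have "\<sigma> i \<in> I \<rightarrow>\<^sub>E B"
      using into by blast
    then show "restrict (\<sigma> i) ?K \<in> ?K \<rightarrow>\<^sub>E B"
      by (auto simp: PiE_iff)
  qed
  ultimately have "card A \<le> card (?K \<rightarrow>\<^sub>E B)"
    using fin by (intro card_inj_on_le) (auto intro: finite_PiE)
  also have "\<dots> = card B ^ (card I - 1)"
    using fin l by (simp add: card_PiE)
  finally show ?thesis .
qed

lemma pow_pred_num_digits_less:
  assumes "2 \<le> n" "2 \<le> b"
  shows "b ^ (num_digits b n - 1) < n"
proof -
  have "0 < log (real b) (real n)"
    using assms by simp
  then have "real (num_digits b n - 1) < log (real b) (real n)"
    unfolding num_digits_def by (simp add: of_nat_diff) linarith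
  then have "real b powr real (num_digits b n - 1) < real n"
    using assms by (subst less_log_iff[symmetric]) auto
  then show ?thesis
    using assms by (simp add: powr_realpow)
qed

lemma design_set_nonempty:
  assumes "2 \<le> n" "2 \<le> b"
    and \<sigma>: "\<sigma> \<in> {1..n} \<rightarrow> ({1..num_digits b n} \<rightarrow>\<^sub>E {0..<b})" "inj_on \<sigma> {1..n}"
    and S: "S \<in> design_sets n b (num_digits b n) \<sigma>"
  shows "S \<noteq> {}"
proof
  assume "S = {}"
  obtain l d where "l \<in> {1..num_digits b n}" "S = {i \<in> {1..n}. \<sigma> i l \<noteq> d}"
    using S unfolding design_sets_def by blast
  with \<open>S = {}\<close> have "card {1..n} \<le> card {0..<b} ^ (card {1..num_digits b n} - 1)"
    using \<sigma> by (intro card_le_pow_if_coordinate_const[where l = l and d = d]) auto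
  then show False
    using pow_pred_num_digits_less[OF assms(1,2)] by simp
qed

theorem proposition4p7:
  fixes n b :: nat
    and \<sigma> :: "nat \<Rightarrow> nat \<Rightarrow> nat"
    and Ns :: "nat set set"
    and v :: "nat \<Rightarrow> real"
    and lam vN :: "nat set \<Rightarrow> real"
    and S :: "nat set"
  assumes n2: "n \<ge> 2" and b2: "b \<ge> 2"
    and sigma: "\<sigma> \<in> {1..n} \<rightarrow> ({1..num_digits b n} \<rightarrow>\<^sub>E {0..<b})"
    and sigma_inj: "inj_on \<sigma> {1..n}"
    and part: "partition_on {1..n} Ns"
    and vpos: "\<forall>i\<in>{1..n}. v i > 0"
    and lam_range: "\<forall>N\<in>Ns. 0 \<le> lam N \<and> lam N \<le> 1"
    and vN_pos: "\<forall>N\<in>Ns. lam N = 0 \<longrightarrow> vN N > 0"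
    and A1: "\<forall>N\<in>Ns. lam N = 1 \<longleftrightarrow> card N = 1"
    and A2: "\<forall>T\<in>design_sets n b (num_digits b n) \<sigma>. \<forall>N\<in>Ns. \<forall>N'\<in>Ns.
               N \<noteq> N' \<and> N \<inter> T \<noteq> {} \<and> N \<inter> T \<noteq> N \<and> N' \<inter> T \<noteq> {} \<and> N' \<inter> T \<noteq> N'
               \<longrightarrow> mult v lam N T \<noteq> mult v lam N' T"
    and S: "S \<in> design_sets n b (num_digits b n) \<sigma>"
  shows
    "(\<forall>i\<in>S. nest_of Ns i \<subseteq> S \<longrightarrow>
        (\<forall>k\<in>S. boost n Ns v lam vN i S \<le> boost n Ns v lam vN k S))
     \<and> (\<forall>i\<in>S. \<not> nest_of Ns i \<subseteq> S \<longrightarrow>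
        (\<forall>j\<in>S - {i}. nest_of Ns i = nest_of Ns j \<longleftrightarrow>
                        boost n Ns v lam vN i S = boost n Ns v lam vN j S))
     \<and> ((\<exists>i\<in>S. nest_of Ns i \<subseteq> S) \<longrightarrow> minBF n Ns v lam vN S = \<Union>{N\<in>Ns. N \<subseteq> S})
     \<and> (\<not>(\<exists>i\<in>S. nest_of Ns i \<subseteq> S) \<longrightarrow>
        (\<exists>!N. N \<in> Ns \<and> \<not> N \<subseteq> S \<and> minBF n Ns v lam vN S \<subset> N))
     \<and> (\<forall>i\<in>S. \<forall>j\<in>S. boost n Ns v lam vN i S = boost n Ns v lam vN j S
          \<and> boost n Ns v lam vN j S > Min ((\<lambda>k. boost n Ns v lam vN k S) ` S)
          \<longrightarrow> nest_of Ns i = nest_of Ns j)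
     \<and> (\<forall>i\<in>S. \<forall>j\<in>S. boost n Ns v lam vN i S \<noteq> boost n Ns v lam vN j S
          \<longrightarrow> nest_of Ns i \<noteq> nest_of Ns j)"
proof -
  interpret nested_logit_assortment n Ns v lam vN S
  proof
    show "S \<subseteq> {1..n}"
      using S unfolding design_sets_def by blast
    show "S \<noteq> {}"
      using design_set_nonempty[OF n2 b2 sigma sigma_inj S] .
    fix N N' assume "N \<in> Ns" "N' \<in> Ns" "N \<noteq> N'" "N \<inter> S \<noteq> {}" "\<not> N \<subseteq> S"
      "N' \<inter> S \<noteq> {}" "\<not> N' \<subseteq> S"
    then show "mult v lam N S \<noteq> mult v lam N' S"
      using A2 S by blast
  qed (use part vpos lam_range vN_pos A1 in auto)
  show ?thesis
  proof (intro conjI)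
    show "\<forall>i\<in>S. nest i \<subseteq> S \<longrightarrow> (\<forall>k\<in>S. BF i \<le> BF k)"
      using boost_le_if_nest_subset by blast
    show "\<forall>i\<in>S. \<not> nest i \<subseteq> S \<longrightarrow> (\<forall>j\<in>S - {i}. nest i = nest j \<longleftrightarrow> BF i = BF j)"
      using same_nest_if_boost_eq boost_eq_if_same_nest by blast
    show "(\<exists>i\<in>S. nest i \<subseteq> S) \<longrightarrow> minBF n Ns v lam vN S = \<Union>{N \<in> Ns. N \<subseteq> S}"
      using minBF_eq_Union_covered_nests by blast
    show "\<not> (\<exists>i\<in>S. nest i \<subseteq> S) \<longrightarrow> (\<exists>!N. N \<in> Ns \<and> \<not> N \<subseteq> S \<and> minBF n Ns v lam vN S \<subset> N)"
      using ex1_nest_containing_minBF by simp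
    show "\<forall>i\<in>S. \<forall>j\<in>S. BF i = BF j \<and> Min (BF ` S) < BF j \<longrightarrow> nest i = nest j"
      using same_nest_if_boost_eq_gt_Min by blast
    show "\<forall>i\<in>S. \<forall>j\<in>S. BF i \<noteq> BF j \<longrightarrow> nest i \<noteq> nest j"
      using boost_eq_if_same_nest by blast
  qed
qed

end
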